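(* Fix integers $d\ge 2$ and $n$ with $d+2\leq n\leq 2d$. Every $n$-point softmax code $X$ in $S^{d-1}$ has no softmax rattler.
   Context: $[n]=\{1,\ldots,n\}$. For a configuration $X=\{x_i\}_{i\in[n]}$ in the unit sphere $S^{d-1}\subseteq\mathbb{R}^d$, $\delta(X):=\min_{j\in[n]}\operatorname{dist}(x_j,\operatorname{conv}\{x_i\}_{i\in[n]\setminus\{j\}})$. A softmax code is an $n$-point configuration in $S^{d-1}$ maximizing $\delta$. A softmax rattler of $X$ is an index $j\in[n]$ with $\operatorname{dist}(x_j,\operatorname{conv}\{x_i\}_{i\in[n]\setminus\{j\}})>\delta(X)$. *)

theory Defs
  imports "HOL-Analysis.Analysis"
begin

definition sm_dist :: "nat \<Rightarrow> (nat \<Rightarrow> 'a::euclidean_space) \<Rightarrow> nat \<Rightarrow> real" where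
  "sm_dist n x j = infdist (x j) (convex hull (x ` ({1..n} - {j})))"

definition sm_delta :: "nat \<Rightarrow> (nat \<Rightarrow> 'a::euclidean_space) \<Rightarrow> real" where
  "sm_delta n x = Min ((\<lambda>j. sm_dist n x j) ` {1..n})"

definition on_sphere_config :: "nat \<Rightarrow> (nat \<Rightarrow> 'a::euclidean_space) \<Rightarrow> bool" where
  "on_sphere_config n x \<longleftrightarrow> (\<forall>i\<in>{1..n}. x i \<in> sphere 0 1)"

definition softmax_code :: "nat \<Rightarrow> (nat \<Rightarrow> 'a::euclidean_space) \<Rightarrow> bool" where
  "softmax_code n x \<longleftrightarrow> on_sphere_config n x \<and>
     (\<forall>y::nat \<Rightarrow> 'a. on_sphere_config n y \<longrightarrow> sm_delta n y \<le> sm_delta n x)"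

definition softmax_rattler :: "nat \<Rightarrow> (nat \<Rightarrow> 'a::euclidean_space) \<Rightarrow> nat \<Rightarrow> bool" where
  "softmax_rattler n x j \<longleftrightarrow> j \<in> {1..n} \<and> sm_dist n x j > sm_delta n x"

end

theory Submission
  imports Defs
begin

(*
  The points e_1, ..., e_d, -e_1, ..., -e_d are pairwise non-acute, so a softmax code with
  n <= 2d points has delta >= 1. If j were a rattler, then dist(x_j, conv(others)) > 1 = |x_j|,
  so 0 is not in the convex hull of the other n - 1 points. Together with 0 these are
  n >= d + 2 points, hence they have a Radon partition. The part containing 0 has hull made of
  segments [0, q] with q in the hull of its other points, so the two hulls meet in some t q with
  0 < t <= 1. A half-space argument shows that one of those unit vectors is at distance < 1
  from t q, a point of the hull of the remaining points: its distance is < 1 <= delta.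
*)

lemma norm_le_infdist_convex_hull:
  fixes v :: "'a::real_inner"
  assumes "T \<noteq> {}" and "\<forall>t\<in>T. inner v t \<le> 0"
  shows "norm v \<le> infdist v (convex hull T)"
proof -
  have hull_in_halfspace: "convex hull T \<subseteq> {z. inner v z \<le> 0}"
    using assms(2) by (intro hull_minimal) (auto simp: convex_halfspace_le)
  have "norm v \<le> dist v z" if "z \<in> convex hull T" for z
  proof -
    have "inner v z \<le> 0"
      using hull_in_halfspace that by auto
    then have "(norm v)\<^sup>2 \<le> (norm v)\<^sup>2 - 2 * inner v z + (norm z)\<^sup>2"
      using zero_le_power2[of "norm z"] by linarith
    also have "\<dots> = (dist v z)\<^sup>2"
      by (simp add: dist_norm power2_norm_eq_inner inner_diff inner_commute)
    finally show ?thesis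
      by (rule power2_le_imp_le) simp
  qed
  then show ?thesis
    using assms(1) by (simp add: infdist_notempty cINF_greatest)
qed

text \<open>If every v in B were at distance at least 1 from r = t q, the unit-ball bound
  would put B, hence also q, into the half-space 2 <y, r> \<le> |r|^2; for q this says t \<ge> 2.\<close>
lemma convex_hull_scaled_point_near_vertex:
  fixes B :: "'a::real_inner set"
  assumes "\<forall>v\<in>B. norm v \<le> 1" and "q \<in> convex hull B" and "q \<noteq> 0"
    and "0 < t" and "t < 2"
  shows "\<exists>v\<in>B. dist v (t *\<^sub>R q) < 1"
proof (rule ccontr)
  assume "\<not> ?thesis"
  then have far: "1 \<le> dist v (t *\<^sub>R q)" if "v \<in> B" for v
    using that by (simp add: not_less)
  let ?H = "{y. inner (2 *\<^sub>R t *\<^sub>R q) y \<le> inner (t *\<^sub>R q) (t *\<^sub>R q)}"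
  have "B \<subseteq> ?H"
  proof
    fix v assume "v \<in> B"
    have "1 \<le> (dist v (t *\<^sub>R q))\<^sup>2"
      using far[OF \<open>v \<in> B\<close>] by (simp add: one_le_power)
    also have "\<dots> = (norm v)\<^sup>2 - inner (2 *\<^sub>R t *\<^sub>R q) v + inner (t *\<^sub>R q) (t *\<^sub>R q)"
      by (simp add: dist_norm power2_norm_eq_inner inner_diff inner_commute)
    finally have "1 \<le> (norm v)\<^sup>2 - inner (2 *\<^sub>R t *\<^sub>R q) v + inner (t *\<^sub>R q) (t *\<^sub>R q)" .
    moreover have "(norm v)\<^sup>2 \<le> 1"
      using assms(1) \<open>v \<in> B\<close> by (simp add: power_le_one)
    ultimately show "v \<in> ?H"
      by (simp add: algebra_simps)
  qed
  then have "convex hull B \<subseteq> ?H"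
    by (rule hull_minimal) (rule convex_halfspace_le)
  then have "q \<in> ?H"
    using assms(2) by blast
  then have "2 * (t * inner q q) \<le> t * (t * inner q q)"
    by simp
  moreover have "0 < t * inner q q"
    using assms(3,4) by simp
  ultimately have "2 \<le> t"
    by (rule mult_right_le_imp_le)
  then show False
    using assms(5) by simp
qed

lemma exists_vertex_near_hull_of_others:
  fixes S :: "'a::euclidean_space set"
  assumes "finite S" and "\<forall>v\<in>S. norm v \<le> 1" and "0 \<notin> convex hull S"
    and "affine_dependent (insert 0 S)"
  shows "\<exists>v\<in>S. \<exists>z\<in>convex hull (S - {v}). dist v z < 1"
proof -
  obtain M P where disjoint: "M \<inter> P = {}" and partition: "M \<union> P = insert 0 S"
    and "convex hull M \<inter> convex hull P \<noteq> {}" and zero_M: "0 \<in> M"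
  proof -
    obtain M P where "M \<inter> P = {}" "M \<union> P = insert 0 S" "convex hull M \<inter> convex hull P \<noteq> {}"
      using Radon_partition[of "insert 0 S"] assms(1,4) by auto
    then show thesis
      using that[of M P] that[of P M] by (metis Int_commute Un_commute Un_iff insertI1)
  qed
  then obtain z where z: "z \<in> convex hull M" "z \<in> convex hull P"
    by blast
  have P_sub: "P \<subseteq> S"
    using disjoint partition zero_M by blast
  then have "z \<noteq> 0"
    using assms(3) z(2) hull_mono[OF P_sub] by blast
  define B where "B = M - {0}"
  have M_eq: "M = insert 0 B"
    using zero_M by (auto simp: B_def)
  have B_sub: "B \<subseteq> S"
    using partition by (auto simp: B_def)
  have "B \<noteq> {}"
    using z(1) \<open>z \<noteq> 0\<close> M_eq by (metis convex_hull_singleton singletonD)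
  have "z \<in> convex hull (insert 0 B)"
    using z(1) M_eq by simp
  then obtain u t q where "0 \<le> u" "0 \<le> t" "u + t = 1" and q: "q \<in> convex hull B"
    and z_eq: "z = t *\<^sub>R q"
    unfolding convex_hull_insert[OF \<open>B \<noteq> {}\<close>] by auto
  then have "0 < t" "t < 2" "q \<noteq> 0"
    using \<open>z \<noteq> 0\<close> by auto
  then obtain v where "v \<in> B" "dist v z < 1"
    using convex_hull_scaled_point_near_vertex[OF _ q] assms(2) B_sub z_eq by blast
  moreover have "z \<in> convex hull (S - {v})"
    using hull_mono[of P "S - {v}"] z(2) P_sub disjoint \<open>v \<in> B\<close> B_def by blast
  ultimately show ?thesis
    using B_sub by blast
qed

lemma one_le_sm_delta_if_pairwise_obtuse:
  fixes y :: "nat \<Rightarrow> 'a::euclidean_space"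
  assumes "2 \<le> n" and "on_sphere_config n y"
    and "\<And>i k. i \<in> {1..n} \<Longrightarrow> k \<in> {1..n} \<Longrightarrow> i \<noteq> k \<Longrightarrow> inner (y i) (y k) \<le> 0"
  shows "1 \<le> sm_delta n y"
proof -
  have "1 \<le> sm_dist n y j" if j: "j \<in> {1..n}" for j
  proof -
    have "(if j = 1 then 2 else 1) \<in> {1..n} - {j}"
      using assms(1) j by auto
    then have "y ` ({1..n} - {j}) \<noteq> {}"
      by blast
    then have "norm (y j) \<le> sm_dist n y j"
      unfolding sm_dist_def using assms(3) j by (intro norm_le_infdist_convex_hull) auto
    then show ?thesis
      using assms(2) j by (simp add: on_sphere_config_def)
  qed
  then show ?thesis
    using assms(1) by (simp add: sm_delta_def)
qed

lemma exists_pairwise_obtuse_sphere_config: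
  assumes "n \<le> 2 * DIM('a::euclidean_space)"
  obtains y :: "nat \<Rightarrow> 'a::euclidean_space" where "on_sphere_config n y"
    and "\<And>i k. i \<in> {1..n} \<Longrightarrow> k \<in> {1..n} \<Longrightarrow> i \<noteq> k \<Longrightarrow> inner (y i) (y k) \<le> 0"
proof -
  define d where "d = DIM('a)"
  obtain b :: "nat \<Rightarrow> 'a" where b: "bij_betw b {0..<d} Basis"
    using ex_bij_betw_nat_finite[of "Basis :: 'a set"] by (auto simp: d_def)
  have b_Basis: "b k \<in> Basis" if "k < d" for k
    using b that by (auto dest: bij_betwE)
  have inner_b: "inner (b k) (b l) = (if k = l then 1 else 0)" if "k < d" "l < d" for k l
    using b_Basis[OF that(1)] b_Basis[OF that(2)] bij_betw_imp_inj_on[OF b] that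
    by (auto simp: inner_Basis inj_on_def)
  define y :: "nat \<Rightarrow> 'a" where "y i = (if i \<le> d then b (i - 1) else - b (i - d - 1))" for i
  show thesis
  proof
    show "on_sphere_config n y"
      using assms b_Basis by (auto simp: on_sphere_config_def y_def d_def)
    show "inner (y i) (y k) \<le> 0" if "i \<in> {1..n}" "k \<in> {1..n}" "i \<noteq> k" for i k
      using that assms by (auto simp: y_def inner_b d_def)
  qed
qed

lemma one_le_sm_delta_softmax_code:
  fixes x :: "nat \<Rightarrow> 'a::euclidean_space"
  assumes "2 \<le> n" and "n \<le> 2 * DIM('a)" and "softmax_code n x"
  shows "1 \<le> sm_delta n x"
proof -
  obtain y :: "nat \<Rightarrow> 'a" where "on_sphere_config n y"
    and "\<And>i k. i \<in> {1..n} \<Longrightarrow> k \<in> {1..n} \<Longrightarrow> i \<noteq> k \<Longrightarrow> inner (y i) (y k) \<le> 0"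
    using exists_pairwise_obtuse_sphere_config[OF assms(2)] by blast
  then have "1 \<le> sm_delta n y"
    using one_le_sm_delta_if_pairwise_obtuse[OF assms(1)] by blast
  also have "\<dots> \<le> sm_delta n x"
    using assms(3) \<open>on_sphere_config n y\<close> by (simp add: softmax_code_def)
  finally show ?thesis .
qed

lemma sm_delta_le_sm_dist:
  fixes x :: "nat \<Rightarrow> 'a::euclidean_space"
  shows "j \<in> {1..n} \<Longrightarrow> sm_delta n x \<le> sm_dist n x j"
  unfolding sm_delta_def by (intro Min_le) auto

lemma inj_on_if_sm_delta_pos:
  fixes x :: "nat \<Rightarrow> 'a::euclidean_space"
  assumes "0 < sm_delta n x"
  shows "inj_on x {1..n}"
proof (rule inj_onI, rule ccontr)
  fix i k assume "i \<in> {1..n}" "k \<in> {1..n}" "x i = x k" "i \<noteq> k"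
  then have "x i \<in> convex hull (x ` ({1..n} - {i}))"
    by (intro hull_inc) (metis Diff_iff image_eqI singletonD)
  then have "sm_dist n x i = 0"
    by (simp add: sm_dist_def)
  then show False
    using sm_delta_le_sm_dist[OF \<open>i \<in> {1..n}\<close>, of x] assms by simp
qed

lemma sm_dist_le_norm_if_zero_in_hull:
  fixes x :: "nat \<Rightarrow> 'a::euclidean_space"
  assumes "0 \<in> convex hull (x ` ({1..n} - {j}))"
  shows "sm_dist n x j \<le> norm (x j)"
  using infdist_le[OF assms, of "x j"] by (simp add: sm_dist_def)

lemma exists_sm_dist_less_one:
  fixes x :: "nat \<Rightarrow> 'a::euclidean_space"
  assumes "on_sphere_config n x" and "inj_on x {1..n}" and "DIM('a) + 2 \<le> n"
    and j: "j \<in> {1..n}" and zero_notin: "0 \<notin> convex hull (x ` ({1..n} - {j}))"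
  shows "\<exists>i\<in>{1..n}. sm_dist n x i < 1"
proof -
  define S where "S = x ` ({1..n} - {j})"
  have "finite S" and S_unit: "\<forall>v\<in>S. norm v \<le> 1"
    using assms(1) by (auto simp: S_def on_sphere_config_def)
  have "0 \<notin> S"
    using zero_notin hull_subset[of S convex] by (auto simp: S_def)
  moreover have "card S = n - 1"
    using inj_on_subset[OF assms(2)] j by (simp add: S_def card_image)
  ultimately have "card (insert 0 S) = n"
    using \<open>finite S\<close> j by simp
  then have "affine_dependent (insert 0 S)"
    using \<open>finite S\<close> assms(3) by (intro affine_dependent_biggerset) simp_all
  then obtain v z where "v \<in> S" "z \<in> convex hull (S - {v})" "dist v z < 1"
    using exists_vertex_near_hull_of_others[OF \<open>finite S\<close> S_unit] zero_notin
    by (auto simp: S_def)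
  moreover obtain i where "i \<in> {1..n}" "v = x i"
    using \<open>v \<in> S\<close> unfolding S_def by blast
  moreover have "S - {v} \<subseteq> x ` ({1..n} - {i})"
    using \<open>v = x i\<close> by (auto simp: S_def)
  ultimately have "i \<in> {1..n}" "z \<in> convex hull (x ` ({1..n} - {i}))" "dist (x i) z < 1"
    using hull_mono by blast+
  then show ?thesis
    unfolding sm_dist_def using infdist_le le_less_trans by blast
qed

theorem lemma8:
  fixes n :: nat and x :: "nat \<Rightarrow> 'a::euclidean_space"
  assumes "DIM('a) \<ge> 2" and "DIM('a) + 2 \<le> n" and "n \<le> 2 * DIM('a)"
    and "softmax_code n x"
  shows "\<not> (\<exists>j. softmax_rattler n x j)"
proof
  assume "\<exists>j. softmax_rattler n x j"
  then obtain j where j: "j \<in> {1..n}" and rattler: "sm_delta n x < sm_dist n x j"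
    by (auto simp: softmax_rattler_def)
  have delta: "1 \<le> sm_delta n x"
    using assms(2) by (intro one_le_sm_delta_softmax_code[OF _ assms(3,4)]) simp
  have sphere: "on_sphere_config n x"
    using assms(4) by (simp add: softmax_code_def)
  have "0 \<notin> convex hull (x ` ({1..n} - {j}))"
    using sm_dist_le_norm_if_zero_in_hull[of x n j] rattler delta sphere j
    by (auto simp: on_sphere_config_def)
  moreover have "inj_on x {1..n}"
    using delta by (intro inj_on_if_sm_delta_pos) simp
  ultimately obtain i where "i \<in> {1..n}" "sm_dist n x i < 1"
    using exists_sm_dist_less_one[OF sphere _ assms(2) j] by blast
  then show False
    using sm_delta_le_sm_dist[of i n x] delta by simp
qed

end
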